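(* Let $k\ge1$ and let $\sigma=\sigma_1\sigma_2\cdots\sigma_k\in\mathfrak S_k$ be a consecutive pattern. Let $1\text{-}\sigma$ denote the generalized pattern $1\text{-}(\sigma_1+1)(\sigma_2+1)\cdots(\sigma_k+1)$ of length $k+1$. Then, as formal power series, $$A_{1\text{-}\sigma}(z)=\exp\left(\int_0^z A_\sigma(t)\,dt\right).$$
   Context: $\mathfrak S_n$ is the symmetric group on $\{1,\dots,n\}$, permutations written in one-line notation $\pi=\pi_1\cdots\pi_n$. A generalized pattern of length $m$ is a permutation $\sigma_1\cdots\sigma_m\in\mathfrak S_m$ together with, for each $j=1,\dots,m-1$, a choice of either inserting a dash "-" between $\sigma_j$ and $\sigma_{j+1}$ or not; write it $\sigma_1\varepsilon_1\sigma_2\cdots\varepsilon_{m-1}\sigma_m$ with each $\varepsilon_j$ either "-" or empty. A permutation $\pi\in\mathfrak S_n$ contains this pattern if there are indices $i_1<\dots<i_m$ such that (i) whenever $\varepsilon_j$ is empty, $i_{j+1}=i_j+1$, and (ii) for all $a,b$, $\pi_{i_a}<\pi_{i_b}$ iff $\sigma_a<\sigma_b$. Otherwise $\pi$ avoids it. A consecutive pattern is one with no dashes (an occurrence must occupy adjacent positions). For a generalized pattern $\sigma$, $\alpha_n(\sigma)$ is the number of permutations in $\mathfrak S_n$ avoiding $\sigma$ (with $\alpha_0(\sigma)=1$ for the empty permutation), and $A_\sigma(z)=\sum_{n\ge0}\alpha_n(\sigma)z^n/n!$ is its exponential generating function. *)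

theory Defs
  imports "HOL-Computational_Algebra.Formal_Power_Series" "HOL-Combinatorics.Multiset_Permutations"
begin

text \<open>A generalized pattern of length m is a pair (sigma, eps): sigma is a list
  (one-line notation of a permutation of {1..m}) and eps is a list of length m-1,
  where eps!j = True means a dash between sigma_(j+1) and sigma_(j+2) (0-based j),
  and False means no dash (adjacency required).\<close>

type_synonym gpattern = "nat list \<times> bool list"

definition occurrence :: "gpattern \<Rightarrow> nat list \<Rightarrow> (nat \<Rightarrow> nat) \<Rightarrow> bool" where
  "occurrence p \<pi> \<iota> \<longleftrightarrow>
     (let \<sigma> = fst p; \<epsilon> = snd p; m = length \<sigma> in
       (\<forall>a b. a < b \<longrightarrow> b < m \<longrightarrow> \<iota> a < \<iota> b) \<and>
       (\<forall>a < m. \<iota> a < length \<pi>) \<and>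
       (\<forall>j. j + 1 < m \<longrightarrow> \<not> (\<epsilon> ! j) \<longrightarrow> \<iota> (j + 1) = \<iota> j + 1) \<and>
       (\<forall>a < m. \<forall>b < m. (\<pi> ! \<iota> a < \<pi> ! \<iota> b) \<longleftrightarrow> (\<sigma> ! a < \<sigma> ! b)))"

definition contains :: "nat list \<Rightarrow> gpattern \<Rightarrow> bool" where
  "contains \<pi> p \<longleftrightarrow> (\<exists>\<iota>. occurrence p \<pi> \<iota>)"

definition alpha :: "gpattern \<Rightarrow> nat \<Rightarrow> nat" where
  "alpha p n = card {\<pi> \<in> permutations_of_set {1..n}. \<not> contains \<pi> p}"

definition avoid_egf :: "gpattern \<Rightarrow> rat fps" where
  "avoid_egf p = Abs_fps (\<lambda>n. of_nat (alpha p n) / of_nat (fact n))"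

end

theory Submission
  imports Defs
begin

text \<open>Cut a permutation at its minimum \<open>m\<close>, say \<open>\<pi> = L m R\<close>. Since \<open>m\<close> is smaller
  than every other entry, an occurrence of \<open>1-\<sigma>\<close> cannot have its consecutive \<open>\<sigma>\<close>-part
  straddle \<open>m\<close>, and if that part lies in \<open>R\<close>, then \<open>m\<close> itself can play the role of the
  \<open>1\<close>. Hence \<open>\<pi>\<close> avoids \<open>1-\<sigma>\<close> iff \<open>L\<close> avoids \<open>1-\<sigma>\<close> and \<open>R\<close> avoids \<open>\<sigma>\<close>. Choosing the
  entries of \<open>L\<close> gives \<open>a(n+1) = \<Sum>j\<le>n. (n choose j) a(j) b(n-j)\<close>, where \<open>a\<close> and \<open>b\<close> count
  the avoiders of \<open>1-\<sigma>\<close> and of \<open>\<sigma>\<close>; for the exponential generating functions this is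
  \<open>A' = A \<cdot> A\<^sub>\<sigma>\<close>, and together with \<open>A(0) = 1\<close> it forces \<open>A = exp (\<integral> A\<^sub>\<sigma>)\<close>.\<close>

unbundle fps_syntax

definition consecutive_pattern :: "nat list \<Rightarrow> gpattern" where
  "consecutive_pattern \<sigma> = (\<sigma>, replicate (length \<sigma> - 1) False)"

definition one_dash_pattern :: "nat list \<Rightarrow> gpattern" where
  "one_dash_pattern \<sigma> = (1 # map Suc \<sigma>, True # replicate (length \<sigma> - 1) False)"

definition occurs_consecutively_at :: "nat list \<Rightarrow> nat list \<Rightarrow> nat \<Rightarrow> bool" where
  "occurs_consecutively_at \<sigma> \<pi> j \<longleftrightarrow> j + length \<sigma> \<le> length \<pi> \<and>
     (\<forall>a<length \<sigma>. \<forall>b<length \<sigma>. (\<pi> ! (j + a) < \<pi> ! (j + b)) = (\<sigma> ! a < \<sigma> ! b))"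

lemma occurrence_Pair_iff:
  "occurrence (\<sigma>, \<epsilon>) \<pi> \<iota> \<longleftrightarrow>
     (\<forall>a b. a < b \<longrightarrow> b < length \<sigma> \<longrightarrow> \<iota> a < \<iota> b) \<and>
     (\<forall>a < length \<sigma>. \<iota> a < length \<pi>) \<and>
     (\<forall>j. j + 1 < length \<sigma> \<longrightarrow> \<not> \<epsilon> ! j \<longrightarrow> \<iota> (j + 1) = \<iota> j + 1) \<and>
     (\<forall>a < length \<sigma>. \<forall>b < length \<sigma>. (\<pi> ! \<iota> a < \<pi> ! \<iota> b) \<longleftrightarrow> (\<sigma> ! a < \<sigma> ! b))"
  by (simp only: occurrence_def Let_def fst_conv snd_conv)

lemma occurrence_undashed_block:
  assumes "occurrence (\<sigma>, \<epsilon>) \<pi> \<iota>"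
    and "\<And>j. lo \<le> j \<Longrightarrow> j + 1 < length \<sigma> \<Longrightarrow> \<not> \<epsilon> ! j"
    and "lo + d < length \<sigma>"
  shows "\<iota> (lo + d) = \<iota> lo + d"
  using assms(3)
proof (induction d)
  case (Suc d)
  then have "\<iota> (lo + d + 1) = \<iota> (lo + d) + 1"
    using assms(1) assms(2)[of "lo + d"] unfolding occurrence_Pair_iff by simp
  then show ?case using Suc by simp
qed simp

lemma contains_consecutive_pattern_iff:
  assumes "\<sigma> \<noteq> []"
  shows "contains \<pi> (consecutive_pattern \<sigma>) \<longleftrightarrow> (\<exists>j. occurs_consecutively_at \<sigma> \<pi> j)"
proof
  assume "contains \<pi> (consecutive_pattern \<sigma>)"
  then obtain \<iota> where occ: "occurrence (\<sigma>, replicate (length \<sigma> - 1) False) \<pi> \<iota>"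
    unfolding contains_def consecutive_pattern_def by blast
  have block: "a < length \<sigma> \<Longrightarrow> \<iota> a = \<iota> 0 + a" for a
    using occurrence_undashed_block[OF occ, of 0 a] by simp
  have "\<iota> (length \<sigma> - 1) < length \<pi>"
    using occ assms unfolding occurrence_Pair_iff by simp
  moreover have "(\<pi> ! (\<iota> 0 + a) < \<pi> ! (\<iota> 0 + b)) = (\<sigma> ! a < \<sigma> ! b)"
    if "a < length \<sigma>" "b < length \<sigma>" for a b
    using occ that block[OF that(1)] block[OF that(2)] unfolding occurrence_Pair_iff by metis
  ultimately have "occurs_consecutively_at \<sigma> \<pi> (\<iota> 0)"
    using block[of "length \<sigma> - 1"] assms unfolding occurs_consecutively_at_def by simp
  then show "\<exists>j. occurs_consecutively_at \<sigma> \<pi> j" ..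
next
  assume "\<exists>j. occurs_consecutively_at \<sigma> \<pi> j"
  then obtain j where "occurs_consecutively_at \<sigma> \<pi> j" ..
  then have "occurrence (consecutive_pattern \<sigma>) \<pi> (\<lambda>a. j + a)"
    unfolding consecutive_pattern_def occurrence_Pair_iff occurs_consecutively_at_def by auto
  then show "contains \<pi> (consecutive_pattern \<sigma>)" unfolding contains_def by blast
qed

lemma contains_one_dash_pattern_iff:
  assumes "\<sigma> \<noteq> []" and "0 \<notin> set \<sigma>"
  shows "contains \<pi> (one_dash_pattern \<sigma>) \<longleftrightarrow>
    (\<exists>i j. i < j \<and> occurs_consecutively_at \<sigma> \<pi> j \<and> (\<forall>b<length \<sigma>. \<pi> ! i < \<pi> ! (j + b)))"
proof
  assume "contains \<pi> (one_dash_pattern \<sigma>)"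
  then obtain \<iota> where occ: "occurrence (1 # map Suc \<sigma>, True # replicate (length \<sigma> - 1) False) \<pi> \<iota>"
    unfolding contains_def one_dash_pattern_def by blast
  have block: "a < length \<sigma> \<Longrightarrow> \<iota> (Suc a) = \<iota> 1 + a" for a
    using occurrence_undashed_block[OF occ, of 1 a] by (simp add: nth_Cons')
  have ord: "a < Suc (length \<sigma>) \<Longrightarrow> b < Suc (length \<sigma>) \<Longrightarrow>
      (\<pi> ! \<iota> a < \<pi> ! \<iota> b) = ((1 # map Suc \<sigma>) ! a < (1 # map Suc \<sigma>) ! b)" for a b
    using occ unfolding occurrence_Pair_iff by simp
  have "\<iota> 0 < \<iota> 1" and "\<iota> (length \<sigma>) < length \<pi>"
    using occ assms(1) unfolding occurrence_Pair_iff by simp_all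
  moreover have "(\<pi> ! (\<iota> 1 + a) < \<pi> ! (\<iota> 1 + b)) = (\<sigma> ! a < \<sigma> ! b)"
    if "a < length \<sigma>" "b < length \<sigma>" for a b
    using ord[of "Suc a" "Suc b"] that by (simp add: block)
  moreover have "\<pi> ! \<iota> 0 < \<pi> ! (\<iota> 1 + b)" if "b < length \<sigma>" for b
  proof -
    have "\<sigma> ! b \<noteq> 0" using assms(2) nth_mem[OF that] by metis
    then show ?thesis using ord[of 0 "Suc b"] that by (simp add: block)
  qed
  ultimately show "\<exists>i j. i < j \<and> occurs_consecutively_at \<sigma> \<pi> j \<and> (\<forall>b<length \<sigma>. \<pi> ! i < \<pi> ! (j + b))"
    using assms(1) block[of "length \<sigma> - 1"] unfolding occurs_consecutively_at_def
    by (intro exI[of _ "\<iota> 0"] exI[of _ "\<iota> 1"]) auto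
next
  assume "\<exists>i j. i < j \<and> occurs_consecutively_at \<sigma> \<pi> j \<and> (\<forall>b<length \<sigma>. \<pi> ! i < \<pi> ! (j + b))"
  then obtain i j where "i < j" and occ: "occurs_consecutively_at \<sigma> \<pi> j"
    and below: "\<forall>b<length \<sigma>. \<pi> ! i < \<pi> ! (j + b)" by blast
  have "\<sigma> ! b \<noteq> 0" if "b < length \<sigma>" for b
    using assms(2) nth_mem[OF that] by metis
  then have "occurrence (one_dash_pattern \<sigma>) \<pi> (case_nat i (\<lambda>a. j + a))"
    using \<open>i < j\<close> occ below
    unfolding one_dash_pattern_def occurrence_Pair_iff occurs_consecutively_at_def
    by (auto split: nat.split simp: nth_Cons' less_Suc_eq_0_disj)
  then show "contains \<pi> (one_dash_pattern \<sigma>)" unfolding contains_def by blast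
qed

lemma occurs_consecutively_at_append_left:
  "j + length \<sigma> \<le> length xs \<Longrightarrow>
    occurs_consecutively_at \<sigma> (xs @ ys) j \<longleftrightarrow> occurs_consecutively_at \<sigma> xs j"
  unfolding occurs_consecutively_at_def by (auto simp: nth_append)

lemma occurs_consecutively_at_append_right:
  "occurs_consecutively_at \<sigma> (xs @ ys) (length xs + j) \<longleftrightarrow> occurs_consecutively_at \<sigma> ys j"
  unfolding occurs_consecutively_at_def by (auto simp: nth_append)

lemma contains_append_right:
  assumes "contains xs p"
  shows "contains (xs @ ys) p"
proof -
  obtain \<sigma> \<epsilon> where p: "p = (\<sigma>, \<epsilon>)" by fastforce
  obtain \<iota> where "occurrence p xs \<iota>" using assms unfolding contains_def ..
  then have "occurrence p (xs @ ys) \<iota>"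
    unfolding p occurrence_Pair_iff by (auto simp: nth_append)
  then show ?thesis unfolding contains_def by blast
qed

lemma contains_append_left:
  assumes "contains ys p"
  shows "contains (xs @ ys) p"
proof -
  obtain \<sigma> \<epsilon> where p: "p = (\<sigma>, \<epsilon>)" by fastforce
  obtain \<iota> where "occurrence p ys \<iota>" using assms unfolding contains_def ..
  then have "occurrence p (xs @ ys) (\<lambda>a. length xs + \<iota> a)"
    unfolding p occurrence_Pair_iff by (auto simp: nth_append)
  then show ?thesis unfolding contains_def by blast
qed

lemma contains_one_dash_pattern_append_min_cases:
  assumes "\<sigma> \<noteq> []" and "0 \<notin> set \<sigma>" and min: "\<forall>x \<in> set L. m < x"
    and "contains (L @ m # R) (one_dash_pattern \<sigma>)"
  shows "contains L (one_dash_pattern \<sigma>) \<or> contains R (consecutive_pattern \<sigma>)"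
proof -
  define k where "k = length \<sigma>"
  define p where "p = length L"
  note one_dash_iff = contains_one_dash_pattern_iff[OF assms(1,2), folded k_def]
  have left: "i < p \<Longrightarrow> (L @ m # R) ! i = L ! i" for i
    unfolding p_def by (simp add: nth_append)
  obtain i j where "i < j" and occ: "occurs_consecutively_at \<sigma> (L @ m # R) j"
    and below: "\<forall>b<k. (L @ m # R) ! i < (L @ m # R) ! (j + b)"
    using assms(4) one_dash_iff by blast
  consider "j + k \<le> p" | "j \<le> p" "p < j + k" | "p < j" by linarith
  then show ?thesis
  proof cases
    case 1
    then have "occurs_consecutively_at \<sigma> L j"
      using occ occurs_consecutively_at_append_left[of j \<sigma> L "m # R"] unfolding k_def p_def by simp
    moreover have "\<forall>b<k. L ! i < L ! (j + b)" using below 1 \<open>i < j\<close> left by simp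
    ultimately show ?thesis using one_dash_iff \<open>i < j\<close> by blast
  next
    case 2
    then have "(L @ m # R) ! i < m"
      using below[rule_format, of "p - j"] unfolding p_def by (simp add: nth_append)
    moreover have "i < p" using 2 \<open>i < j\<close> by simp
    moreover have "L ! i \<in> set L" using \<open>i < p\<close> unfolding p_def by simp
    ultimately have False using min left[OF \<open>i < p\<close>] by (metis less_asym)
    then show ?thesis ..
  next
    case 3
    then have "j = length (L @ [m]) + (j - Suc p)" unfolding p_def by simp
    then have "occurs_consecutively_at \<sigma> R (j - Suc p)"
      using occ occurs_consecutively_at_append_right[where xs = "L @ [m]"]
    by (metis append_Cons append_assoc append_Nil)
    then show ?thesis using contains_consecutive_pattern_iff[OF assms(1)] by blast
  qed
qed

lemma contains_one_dash_pattern_Cons_min: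
  assumes "\<sigma> \<noteq> []" and "0 \<notin> set \<sigma>" and min: "\<forall>x \<in> set R. m < x"
    and "contains R (consecutive_pattern \<sigma>)"
  shows "contains (m # R) (one_dash_pattern \<sigma>)"
proof -
  obtain j where occ: "occurs_consecutively_at \<sigma> R j"
    using assms(4) contains_consecutive_pattern_iff[OF assms(1)] by blast
  then have "occurs_consecutively_at \<sigma> (m # R) (Suc j)"
    using occurs_consecutively_at_append_right[where xs = "[m]"] by simp
  moreover have "\<forall>b<length \<sigma>. (m # R) ! 0 < (m # R) ! (Suc j + b)"
    using occ min unfolding occurs_consecutively_at_def by auto
  ultimately show ?thesis
    using contains_one_dash_pattern_iff[OF assms(1,2)] by blast
qed

lemma contains_one_dash_pattern_split_at_min:
  assumes "\<sigma> \<noteq> []" and "0 \<notin> set \<sigma>" and "\<forall>x \<in> set L \<union> set R. m < x"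
  shows "contains (L @ m # R) (one_dash_pattern \<sigma>) \<longleftrightarrow>
    contains L (one_dash_pattern \<sigma>) \<or> contains R (consecutive_pattern \<sigma>)"
  using contains_one_dash_pattern_append_min_cases[OF assms(1,2)]
    contains_one_dash_pattern_Cons_min[OF assms(1,2)] assms(3)
    contains_append_left[of "m # R" _ L] contains_append_right[of L _ "m # R"]
  by blast

definition avoiders :: "gpattern \<Rightarrow> nat set \<Rightarrow> nat list set" where
  "avoiders p A = {\<pi> \<in> permutations_of_set A. \<not> contains \<pi> p}"

lemma contains_map_iff:
  assumes "\<And>x y. x \<in> set \<pi> \<Longrightarrow> y \<in> set \<pi> \<Longrightarrow> f x < f y \<longleftrightarrow> x < y"
  shows "contains (map f \<pi>) p \<longleftrightarrow> contains \<pi> p"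
proof -
  obtain \<sigma> \<epsilon> where p: "p = (\<sigma>, \<epsilon>)" by fastforce
  have "occurrence p (map f \<pi>) = occurrence p \<pi>"
    using assms unfolding p occurrence_Pair_iff by (auto simp: nth_mem fun_eq_iff)
  then show ?thesis unfolding contains_def by simp
qed

lemma card_avoiders_eq_alpha:
  assumes "finite A"
  shows "card (avoiders p A) = alpha p (card A)"
proof -
  define n where "n = card A"
  define xs where "xs = sorted_list_of_set A"
  define f where "f i = xs ! (i - 1)" for i
  have len: "length xs = n" and set_xs: "set xs = A"
    unfolding xs_def n_def using assms by simp_all
  have mono: "strict_mono_on {1..n} f"
    using sorted_wrt_nth_less[OF strict_sorted_list_of_set[of A, folded xs_def]] len
    unfolding f_def by (intro strict_mono_onI) auto
  then have inj: "inj_on f {1..n}" by (rule strict_mono_on_imp_inj_on)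
  have "f ` {1..n} = set xs"
    unfolding f_def set_conv_nth len by (force simp: image_iff intro: exI[of _ "Suc _"])
  then have perms: "bij_betw (map f) (permutations_of_set {1..n}) (permutations_of_set A)"
    using permutations_of_set_image_inj[OF inj] inj set_xs
    by (auto simp: bij_betw_def intro!: inj_on_mapI inj_on_subset[OF inj]
        dest: permutations_of_setD)
  have "bij_betw (map f) (avoiders p {1..n}) (avoiders p A)"
    unfolding avoiders_def
    by (rule bij_betw_Collect[OF perms])
      (auto intro!: contains_map_iff strict_mono_on_less[OF mono] dest: permutations_of_setD)
  then show ?thesis unfolding alpha_def avoiders_def n_def by (simp add: bij_betw_same_card)
qed

lemma bij_betw_permutations_of_set_split:
  assumes "m \<in> A"
  shows "bij_betw (\<lambda>(X, L, R). L @ m # R)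
    (SIGMA X:Pow (A - {m}). permutations_of_set X \<times> permutations_of_set (A - {m} - X))
    (permutations_of_set A)" (is "bij_betw ?h ?D _")
proof (rule bij_betwI')
  have decompose: "\<exists>L R. u = (set L, L, R) \<and> m \<notin> set L \<and> m \<notin> set R"
    if "u \<in> ?D" for u
  proof -
    obtain X L R where u: "u = (X, L, R)" by (cases u)
    then have "X \<subseteq> A - {m}" "L \<in> permutations_of_set X" "R \<in> permutations_of_set (A - {m} - X)"
      using that by auto
    then have "X = set L" "m \<notin> set L" "m \<notin> set R" by (auto dest: permutations_of_setD)
    then show ?thesis using u by blast
  qed
  fix u v
  assume "u \<in> ?D" and "v \<in> ?D"
  then obtain L R L' R' where "u = (set L, L, R)" "v = (set L', L', R')" "m \<notin> set L" "m \<notin> set R"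
    using decompose by meson
  then show "?h u = ?h v \<longleftrightarrow> u = v"
    by (auto simp: append_Cons_eq_iff)
next
  fix u
  assume "u \<in> ?D"
  then show "?h u \<in> permutations_of_set A"
    using assms by (auto simp: permutations_of_set_def)
next
  fix y
  assume y: "y \<in> permutations_of_set A"
  then obtain L R where y_eq: "y = L @ m # R"
    using assms split_list[of m y] by (auto dest: permutations_of_setD)
  then have "(set L, L, R) \<in> ?D"
    using y by (auto simp: permutations_of_set_def)
  then show "\<exists>u \<in> ?D. y = ?h u"
    using y_eq by force
qed

lemma card_avoiders_one_dash_pattern:
  assumes "\<sigma> \<noteq> []" and "0 \<notin> set \<sigma>" and "finite A" and "m \<in> A" and "\<forall>x\<in>A. m \<le> x"
  shows "card (avoiders (one_dash_pattern \<sigma>) A) =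
    (\<Sum>X\<in>Pow (A - {m}). card (avoiders (one_dash_pattern \<sigma>) X) *
       card (avoiders (consecutive_pattern \<sigma>) (A - {m} - X)))"
proof -
  let ?P = "one_dash_pattern \<sigma>" and ?S = "consecutive_pattern \<sigma>"
  let ?h = "\<lambda>(X, L, R). L @ m # R"
  let ?D = "SIGMA X:Pow (A - {m}). permutations_of_set X \<times> permutations_of_set (A - {m} - X)"
  let ?E = "SIGMA X:Pow (A - {m}). avoiders ?P X \<times> avoiders ?S (A - {m} - X)"
  have "bij_betw ?h {u \<in> ?D. \<not> contains (?h u) ?P} (avoiders ?P A)"
    unfolding avoiders_def
    by (rule bij_betw_Collect[OF bij_betw_permutations_of_set_split[OF assms(4)]]) simp
  moreover have "{u \<in> ?D. \<not> contains (?h u) ?P} = ?E"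
  proof -
    have "\<not> contains (L @ m # R) ?P \<longleftrightarrow> \<not> contains L ?P \<and> \<not> contains R ?S"
      if "(X, L, R) \<in> ?D" for X L R
    proof -
      have "set L = X" "set R = A - {m} - X" "X \<subseteq> A - {m}"
        using that by (auto dest: permutations_of_setD(1))
      then have "\<forall>x \<in> set L \<union> set R. m < x"
        using assms(5) by force
      then show ?thesis using contains_one_dash_pattern_split_at_min[OF assms(1,2)] by blast
    qed
    then show ?thesis unfolding avoiders_def by auto
  qed
  ultimately have "card (avoiders ?P A) = card ?E"
    by (simp add: bij_betw_same_card)
  also have "\<dots> = (\<Sum>X\<in>Pow (A - {m}). card (avoiders ?P X) * card (avoiders ?S (A - {m} - X)))"
    using assms(3) by (simp add: card_cartesian_product avoiders_def)
  finally show ?thesis .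
qed

lemma sum_Pow_card:
  assumes "finite B"
  shows "(\<Sum>X\<in>Pow B. g (card X)) = (\<Sum>j\<le>card B. of_nat (card B choose j) * g j)"
proof -
  have "(\<Sum>X\<in>Pow B. g (card X)) = (\<Sum>j\<le>card B. \<Sum>X\<in>{X \<in> Pow B. card X = j}. g (card X))"
    using assms by (intro sum.group[symmetric]) (auto intro: card_mono)
  also have "\<dots> = (\<Sum>j\<le>card B. of_nat (card B choose j) * g j)"
    using n_subsets[OF assms] by (intro sum.cong) (simp_all add: Pow_def)
  finally show ?thesis .
qed

lemma alpha_one_dash_pattern_Suc:
  assumes "\<sigma> \<noteq> []" and "0 \<notin> set \<sigma>"
  shows "alpha (one_dash_pattern \<sigma>) (Suc n) =
    (\<Sum>j\<le>n. (n choose j) * (alpha (one_dash_pattern \<sigma>) j * alpha (consecutive_pattern \<sigma>) (n - j)))"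
proof -
  let ?P = "one_dash_pattern \<sigma>" and ?S = "consecutive_pattern \<sigma>"
  have "{1..Suc n} - {1} = {2..Suc n}" by auto
  then have "alpha ?P (Suc n) =
      (\<Sum>X\<in>Pow {2..Suc n}. card (avoiders ?P X) * card (avoiders ?S ({2..Suc n} - X)))"
    using card_avoiders_one_dash_pattern[OF assms, of "{1..Suc n}" 1]
    unfolding alpha_def avoiders_def by simp
  also have "\<dots> = (\<Sum>X\<in>Pow {2..Suc n}. alpha ?P (card X) * alpha ?S (n - card X))"
    by (intro sum.cong refl)
      (auto simp: card_avoiders_eq_alpha card_Diff_subset finite_subset)
  also have "\<dots> = (\<Sum>j\<le>n. (n choose j) * (alpha ?P j * alpha ?S (n - j)))"
    using sum_Pow_card[of "{2..Suc n}" "\<lambda>j. alpha ?P j * alpha ?S (n - j)"] by simp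
  finally show ?thesis .
qed

lemma alpha_0:
  assumes "fst p \<noteq> []"
  shows "alpha p 0 = 1"
proof -
  have "\<not> contains [] p"
    using assms unfolding contains_def occurrence_def Let_def by auto
  then have "{\<pi> \<in> permutations_of_set {1..0}. \<not> contains \<pi> p} = {[]}" by auto
  then show ?thesis unfolding alpha_def by simp
qed

lemma fps_deriv_egf:
  fixes a :: "nat \<Rightarrow> 'a::field_char_0"
  shows "fps_deriv (Abs_fps (\<lambda>n. a n / fact n)) = Abs_fps (\<lambda>n. a (Suc n) / fact n)"
  by (rule fps_ext) (simp add: fps_deriv_def field_simps del: of_nat_Suc)

lemma fps_mult_egf:
  fixes a b :: "nat \<Rightarrow> 'a::field_char_0"
  shows "Abs_fps (\<lambda>n. a n / fact n) * Abs_fps (\<lambda>n. b n / fact n) =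
    Abs_fps (\<lambda>n. (\<Sum>j\<le>n. of_nat (n choose j) * a j * b (n - j)) / fact n)"
proof (rule fps_ext)
  fix n
  have "a j / fact j * (b (n - j) / fact (n - j)) = of_nat (n choose j) * a j * b (n - j) / fact n"
    if "j \<le> n" for j
    using binomial_fact[OF that, where 'a = 'a] by (simp add: field_simps)
  then show "(Abs_fps (\<lambda>n. a n / fact n) * Abs_fps (\<lambda>n. b n / fact n)) $ n =
      Abs_fps (\<lambda>n. (\<Sum>j\<le>n. of_nat (n choose j) * a j * b (n - j)) / fact n) $ n"
    by (simp add: fps_mult_nth atLeast0AtMost sum_divide_distrib)
qed

lemma fps_exp_integral_unique_ODE:
  fixes F B :: "'a::field_char_0 fps"
  assumes "fps_deriv F = F * B" and "F $ 0 = 1"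
  shows "F = fps_exp 1 oo fps_integral B 0"
proof -
  define G where "G = fps_exp 1 oo fps_integral B 0"
  have "fps_integral B 0 $ 0 = 0" by (simp add: fps_integral_def)
  then have G_deriv: "fps_deriv G = G * B"
    unfolding G_def by (simp add: fps_compose_deriv fps_deriv_fps_integral)
  have "G $ 0 = 1" unfolding G_def by simp
  then have "G * inverse G = 1" by (simp add: inverse_mult_eq_1')
  have "fps_deriv (F * inverse G) = 0"
    using assms(1) G_deriv \<open>G $ 0 = 1\<close> \<open>G * inverse G = 1\<close>
    by (simp add: fps_inverse_deriv power2_eq_square algebra_simps)
  then have "F * inverse G = fps_const ((F * inverse G) $ 0)"
    using fps_deriv_eq_0_iff by blast
  then have "F * inverse G = 1"
    using assms(2) \<open>G $ 0 = 1\<close> by simp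
  then show ?thesis
    unfolding G_def[symmetric] using \<open>G * inverse G = 1\<close>
    by (metis mult.assoc mult.commute mult.right_neutral)
qed

theorem mainTheorem1:
  fixes k :: nat and \<sigma> :: "nat list"
  assumes "k \<ge> 1" and "\<sigma> \<in> permutations_of_set {1..k}"
  shows "avoid_egf (1 # map Suc \<sigma>, True # replicate (k - 1) False)
         = fps_exp 1 oo fps_integral (avoid_egf (\<sigma>, replicate (k - 1) False)) 0"
proof -
  have "length \<sigma> = k" and "set \<sigma> = {1..k}"
    using assms(2) by (auto dest: permutations_of_setD length_finite_permutations_of_set)
  then have "\<sigma> \<noteq> []" and "0 \<notin> set \<sigma>"
    and patterns: "(1 # map Suc \<sigma>, True # replicate (k - 1) False) = one_dash_pattern \<sigma>"
      "(\<sigma>, replicate (k - 1) False) = consecutive_pattern \<sigma>"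
    using assms(1) by (auto simp: one_dash_pattern_def consecutive_pattern_def)
  have "fps_deriv (avoid_egf (one_dash_pattern \<sigma>)) =
      avoid_egf (one_dash_pattern \<sigma>) * avoid_egf (consecutive_pattern \<sigma>)"
    unfolding avoid_egf_def of_nat_fact fps_deriv_egf fps_mult_egf
    using alpha_one_dash_pattern_Suc[OF \<open>\<sigma> \<noteq> []\<close> \<open>0 \<notin> set \<sigma>\<close>] by (simp add: mult.assoc)
  moreover have "avoid_egf (one_dash_pattern \<sigma>) $ 0 = 1"
    using alpha_0[of "one_dash_pattern \<sigma>"] by (simp add: avoid_egf_def one_dash_pattern_def)
  ultimately show ?thesis
    unfolding patterns by (rule fps_exp_integral_unique_ODE)
qed

end
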